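(* Let $n \in \mathbb{N}$. (i) Let $p, q \in \mathbb{N}$ with $5F_{n+2}-4 \le p < 5F_{n+3}-4$, $5F_{n+1}-4 \le q < 5F_{n+2}-4$ and $b_q = a_p + 1$. Then: (i.1) if $b_{q+1} - b_q = 3$, then $a_{p+1} = a_p + 2$, $a_{p+2} = a_p + 3$ and $b_{q+1} = a_{p+2} + 1$; (i.2) if $b_{q+1} - b_q = 2$, then $a_{p+1} = a_p + 2$ and $b_{q+1} = a_{p+1} + 1$. (ii) $\{a_{5F_{n+2}-4+u} : u = 0,1,\dots,5F_{n+1}\} \cup \{b_{5F_{n+1}-4+u} : u = 0,1,\dots,5F_n\} = \{5F_{n+3}-4, 5F_{n+3}-3, \dots, 5F_{n+4}-3\}$. (iii) $\{a_{5F_{n+2}-4+u} : u = 0,1,\dots,5F_{n+1}\} \cap \{b_{5F_{n+1}-4+u} : u = 0,1,\dots,5F_n\} = \emptyset$. (iv) $\{a_m : m \in \mathbb{N}\} \cap \{b_m : m \in \mathbb{N}\} = \emptyset$. (v) $\{a_m : m \in \mathbb{N}\} \cup \{b_m : m \in \mathbb{N}\} = \{6,7,8,\dots\}$.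
   Context: Fibonacci numbers: $F_1 = F_2 = 1$, $F_{i+2} = F_{i+1} + F_i$. Let $\sigma$ be the substitution on finite sequences over $\{1,2\}$ replacing each entry $1$ by $2$ and each entry $2$ by $2,1$. Let $C_{1,1} = (1)$, $C_{i+1,1} = \sigma(C_{i,1})$. For $i \in \mathbb{N}$ let $C_i$ be the concatenation of five copies of $C_{i,1}$. Let $(c_n)_{n \in \mathbb{N}}$ be the infinite sequence obtained by concatenating $C_1, C_2, C_3, \dots$ in order, and let $d_n = c_n + 1$. Define $a_1 = 6$, $a_n = 6 + \sum_{i=1}^{n-1} c_i$, and $b_1 = 12$, $b_n = 12 + \sum_{i=1}^{n-1} d_i$ for $n \in \mathbb{N}$. *)

theory Defs
  imports "HOL-Number_Theory.Fib"
begin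

text \<open>Fibonacci numbers: F_i = fib i (library: fib 1 = fib 2 = 1).\<close>

definition sigma :: "nat list \<Rightarrow> nat list" where
  "sigma xs = concat (map (\<lambda>x. if x = 1 then [2] else [2, 1]) xs)"

definition Cblk :: "nat \<Rightarrow> nat list" where
  "Cblk i = (sigma ^^ (i - 1)) [1]"

definition Cfive :: "nat \<Rightarrow> nat list" where
  "Cfive i = concat (replicate 5 (Cblk i))"

text \<open>c_n (1-indexed): the n-th entry of C_1 C_2 C_3 ...; the prefix C_1...C_n
  has length at least 5n >= n, so it contains position n.\<close>
definition cseq :: "nat \<Rightarrow> nat" where
  "cseq n = concat (map Cfive [1..<n+1]) ! (n - 1)"

definition dseq :: "nat \<Rightarrow> nat" where
  "dseq n = cseq n + 1"

definition aseq :: "nat \<Rightarrow> nat" where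
  "aseq n = 6 + (\<Sum>i\<in>{1..<n}. cseq i)"

definition bseq :: "nat \<Rightarrow> nat" where
  "bseq n = 12 + (\<Sum>i\<in>{1..<n}. dseq i)"

end

theory Submission
  imports Defs
begin

(* On the indices 5F_{n+2}-4, ..., 5F_{n+3}-4 the sequence a starts at 5F_{n+3}-4 and its
   increments are the letters of C_{n+1} = sigma(C_n); on 5F_{n+1}-4, ..., 5F_{n+2}-4 the sequence b
   starts at 5F_{n+3}-3 and its increments are the letters of C_n, each increased by 1. A letter 1 of
   C_n gives the a-step 2 against the b-step 2, a letter 2 the a-steps 2, 1 against the b-step 3.
   So, letter by letter, the two runs interleave and fill 5F_{n+3}-4, ..., 5F_{n+4}-3 exactly once,
   and a b-value one above an a-value sits at the start of the image of a letter under sigma, which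
   gives (i). As a and b are strictly increasing, gluing these blocks gives (iv) and (v). *)

lemma Suc_le_fib: "Suc n \<le> fib (n + 2)"
  by (induction n rule: fib.induct) simp_all

lemma fib_add_3: "fib (n + 3) = fib (n + 2) + fib (n + 1)"
  using fib_plus_2[of "n + 1"] by (simp add: numeral_eq_Suc)

lemma fib_add_4: "fib (n + 4) = fib (n + 3) + fib (n + 2)"
  using fib_plus_2[of "n + 2"] by (simp add: numeral_eq_Suc)

lemma sigma_Nil [simp]: "sigma [] = []"
  by (simp add: sigma_def)

lemma sigma_Cons [simp]: "sigma (x # xs) = (if x = 1 then 2 # sigma xs else 2 # 1 # sigma xs)"
  by (simp add: sigma_def)

lemma sigma_append [simp]: "sigma (xs @ ys) = sigma xs @ sigma ys"
  by (simp add: sigma_def)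

lemma sigma_concat_replicate: "sigma (concat (replicate k w)) = concat (replicate k (sigma w))"
  by (induction k) auto

lemma set_sigma: "set (sigma w) \<subseteq> {1, 2}"
  by (induction w) auto

lemma length_sigma: "set w \<subseteq> {1, 2} \<Longrightarrow> length (sigma w) = sum_list w"
  by (induction w) auto

lemma sum_list_sigma: "set w \<subseteq> {1, 2} \<Longrightarrow> sum_list (sigma w) = sum_list w + length w"
  by (induction w) auto

definition partial_sums :: "'a::monoid_add list \<Rightarrow> 'a set" where
  "partial_sums xs = (\<lambda>u. sum_list (take u xs)) ` {..length xs}"

lemma partial_sums_Nil [simp]: "partial_sums [] = {0}"
  by (simp add: partial_sums_def)

lemma partial_sums_Cons [simp]: "partial_sums (x # xs) = insert 0 ((+) x ` partial_sums xs)"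
  by (simp add: partial_sums_def atMost_Suc_eq_insert_0 image_image del: atMost_Suc)

lemma image_atLeastAtMost_eq_partial_sums:
  assumes "\<And>u. u \<le> length xs \<Longrightarrow> f (s + u) = c + sum_list (take u xs)"
  shows "f ` {s..s + length xs} = (+) c ` partial_sums xs"
proof -
  have "{s..s + length xs} = (+) s ` {..length xs}"
    by (simp add: atLeast0AtMost[symmetric] add.commute)
  then have "f ` {s..s + length xs} = (\<lambda>u. f (s + u)) ` {..length xs}"
    by (simp add: image_image)
  also have "\<dots> = (+) c ` partial_sums xs"
    using assms by (auto simp: partial_sums_def image_image intro!: image_cong)
  finally show ?thesis .
qed

lemma sigma_partial_sums_interleave:
  assumes "set w \<subseteq> {1, 2}"
  shows "partial_sums (sigma w) \<union> (+) 1 ` partial_sums (map Suc w) = {0..sum_list w + length w + 1}"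
    (is "?A w \<union> ?B w = _")
  using assms
proof (induction w)
  case (Cons x w)
  then have IH: "?A w \<union> ?B w = {0..sum_list w + length w + 1}" by simp
  from Cons.prems consider "x = 1" | "x = 2" by auto
  then show ?case
  proof cases
    case 1
    then have "?A (x # w) \<union> ?B (x # w) = {0, 1} \<union> (+) 2 ` (?A w \<union> ?B w)"
      by (auto simp: image_image image_Un ac_simps)
    also have "\<dots> = {0..sum_list (x # w) + length (x # w) + 1}"
      unfolding IH image_add_atLeastAtMost using 1 by auto
    finally show ?thesis .
  next
    case 2
    then have "?A (x # w) \<union> ?B (x # w) = {0, 1, 2} \<union> (+) 3 ` (?A w \<union> ?B w)"
      by (auto simp: image_image image_Un ac_simps)
    also have "\<dots> = {0..sum_list (x # w) + length (x # w) + 1}"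
      unfolding IH image_add_atLeastAtMost using 2 by auto
    finally show ?thesis .
  qed
qed auto

lemma sigma_partial_sums_disjoint:
  assumes "set w \<subseteq> {1, 2}"
  shows "partial_sums (sigma w) \<inter> (+) 1 ` partial_sums (map Suc w) = {}"
    (is "?A w \<inter> ?B w = _")
  using assms
proof (induction w)
  case (Cons x w)
  then have IH: "?A w \<inter> ?B w = {}" by simp
  from Cons.prems consider "x = 1" | "x = 2" by auto
  then show ?case
  proof cases
    case 1
    then have "?A (x # w) \<inter> ?B (x # w) = (+) 2 ` (?A w \<inter> ?B w)"
      by (auto simp: image_image)
    also have "\<dots> = {}" unfolding IH by simp
    finally show ?thesis .
  next
    case 2
    then have "?A (x # w) \<inter> ?B (x # w) = (+) 3 ` (?A w \<inter> ?B w)"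
      by (auto simp: image_image)
    also have "\<dots> = {}" unfolding IH by simp
    finally show ?thesis .
  qed
qed auto

lemma sigma_partial_sums_meet:
  assumes "set w \<subseteq> {1, 2}" and "u < length (sigma w)" and "v < length w"
    and "sum_list (take u (sigma w)) = sum_list (take v (map Suc w))"
  shows "sigma w ! u = 2 \<and> (w ! v = 2 \<longrightarrow> Suc u < length (sigma w) \<and> sigma w ! Suc u = 1)"
  using assms
proof (induction w arbitrary: u v)
  case (Cons x w)
  from Cons.prems consider "x = 1" | "x = 2" by auto
  then show ?case
  proof cases
    case 1
    show ?thesis
    proof (cases u)
      case 0
      then show ?thesis using Cons.prems 1 by (cases v) auto
    next
      case (Suc u')
      then show ?thesis using Cons.prems Cons.IH[of u' "v - 1"] 1 by (cases v) auto
    qed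
  next
    case 2
    show ?thesis
    proof (cases u)
      case 0
      then show ?thesis using Cons.prems 2 by (cases v) auto
    next
      case (Suc u1)
      show ?thesis
      proof (cases u1)
        case 0
        then show ?thesis using Cons.prems 2 \<open>u = Suc u1\<close> by (cases v) auto
      next
        case (Suc u')
        then show ?thesis using Cons.prems Cons.IH[of u' "v - 1"] 2 \<open>u = Suc u1\<close> by (cases v) auto
      qed
    qed
  qed
qed simp

lemma Cblk_Suc: "1 \<le> n \<Longrightarrow> Cblk (Suc n) = sigma (Cblk n)"
  by (cases n) (auto simp: Cblk_def)

lemma set_Cblk: "set (Cblk n) \<subseteq> {1, 2}"
  using set_sigma by (cases "n - 1") (auto simp: Cblk_def)

lemma length_sum_list_Cblk: "1 \<le> n \<Longrightarrow> length (Cblk n) = fib n \<and> sum_list (Cblk n) = fib (Suc n)"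
proof (induction n rule: nat_induct_at_least)
  case (Suc n)
  then show ?case
    using set_Cblk[of n] by (simp add: Cblk_Suc length_sigma sum_list_sigma)
qed (simp add: Cblk_def)

lemma Cfive_Suc: "1 \<le> n \<Longrightarrow> Cfive (Suc n) = sigma (Cfive n)"
  by (simp add: Cfive_def Cblk_Suc sigma_concat_replicate)

lemma set_Cfive: "set (Cfive n) \<subseteq> {1, 2}"
  using set_Cblk by (auto simp: Cfive_def)

lemma length_Cfive: "1 \<le> n \<Longrightarrow> length (Cfive n) = 5 * fib n"
  using length_sum_list_Cblk by (simp add: Cfive_def length_concat sum_list_replicate)

lemma sum_list_Cfive: "1 \<le> n \<Longrightarrow> sum_list (Cfive n) = 5 * fib (Suc n)"
  using length_sum_list_Cblk by (simp add: Cfive_def numeral_eq_Suc)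

definition cprefix :: "nat \<Rightarrow> nat list" where
  "cprefix k = concat (map Cfive [1..<k + 1])"

lemma cprefix_Suc: "cprefix (Suc k) = cprefix k @ Cfive (Suc k)"
  by (simp add: cprefix_def)

lemma length_cprefix: "length (cprefix k) + 5 = 5 * fib (k + 2)"
  by (induction k) (simp_all add: cprefix_def length_Cfive)

lemma sum_list_cprefix: "sum_list (cprefix k) + 10 = 5 * fib (k + 3)"
  by (induction k) (simp_all add: cprefix_def sum_list_Cfive numeral_eq_Suc)

lemma set_cprefix: "set (cprefix k) \<subseteq> {1, 2}"
  using set_Cfive by (auto simp: cprefix_def)

lemma nth_cprefix_mono:
  assumes "k \<le> k'" and "j < length (cprefix k)"
  shows "cprefix k' ! j = cprefix k ! j"
proof -
  from assms(1) have "\<exists>r. cprefix k' = cprefix k @ r"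
    by (induction k' rule: dec_induct) (auto simp: cprefix_Suc)
  then show ?thesis using assms(2) by (auto simp: nth_append)
qed

lemma cseq_Suc_eq_nth_cprefix:
  assumes "j < length (cprefix k)"
  shows "cseq (Suc j) = cprefix k ! j"
proof -
  have "j < length (cprefix (Suc j))"
    using length_cprefix[of "Suc j"] Suc_le_fib[of "Suc j"] by simp
  have "cseq (Suc j) = cprefix (Suc j) ! j"
    unfolding cseq_def cprefix_def by simp
  also have "\<dots> = cprefix (max k (Suc j)) ! j"
    using \<open>j < length (cprefix (Suc j))\<close> by (metis max.cobounded2 nth_cprefix_mono)
  also have "\<dots> = cprefix k ! j"
    using assms by (metis max.cobounded1 nth_cprefix_mono)
  finally show ?thesis .
qed

lemma cseq_pos:
  assumes "1 \<le> j"
  shows "0 < cseq j"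
proof -
  obtain i where j: "j = Suc i" using assms by (cases j) auto
  have "i < length (cprefix (Suc i))"
    using length_cprefix[of "Suc i"] Suc_le_fib[of "Suc i"] by simp
  then have "cseq j \<in> set (cprefix (Suc i))"
    unfolding j by (simp add: cseq_Suc_eq_nth_cprefix)
  then show ?thesis using set_cprefix by fastforce
qed

lemma aseq_Suc: "1 \<le> j \<Longrightarrow> aseq (Suc j) = aseq j + cseq j"
  by (simp add: aseq_def)

lemma bseq_Suc: "1 \<le> j \<Longrightarrow> bseq (Suc j) = bseq j + cseq j + 1"
  by (simp add: bseq_def dseq_def)

lemma aseq_Suc_eq_sum_take: "j \<le> length (cprefix k) \<Longrightarrow> aseq (Suc j) = 6 + sum_list (take j (cprefix k))"
  by (induction j) (simp_all add: aseq_def take_Suc_conv_app_nth cseq_Suc_eq_nth_cprefix)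

lemma bseq_Suc_eq_sum_take:
  "j \<le> length (cprefix k) \<Longrightarrow> bseq (Suc j) = 12 + sum_list (take j (map Suc (cprefix k)))"
  by (induction j) (simp_all add: bseq_def dseq_def take_Suc_conv_app_nth cseq_Suc_eq_nth_cprefix)

lemma block_start: "5 * fib (n + 2) - 4 = Suc (length (cprefix n))"
  using length_cprefix[of n] by linarith

lemma aseq_block:
  assumes "u \<le> 5 * fib (n + 1)"
  shows "aseq (5 * fib (n + 2) - 4 + u) = 5 * fib (n + 3) - 4 + sum_list (take u (Cfive (Suc n)))"
proof -
  have "length (cprefix n) + u \<le> length (cprefix (Suc n))"
    using assms length_Cfive[of "Suc n"] by (simp add: cprefix_Suc)
  then have "aseq (5 * fib (n + 2) - 4 + u) = 6 + sum_list (take (length (cprefix n) + u) (cprefix (Suc n)))"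
    unfolding block_start by (simp add: aseq_Suc_eq_sum_take)
  also have "\<dots> = 6 + sum_list (cprefix n) + sum_list (take u (Cfive (Suc n)))"
    by (simp add: cprefix_Suc)
  finally show ?thesis using sum_list_cprefix[of n] by linarith
qed

lemma cseq_block:
  assumes "u < 5 * fib (n + 1)"
  shows "cseq (5 * fib (n + 2) - 4 + u) = Cfive (Suc n) ! u"
proof -
  have "length (cprefix n) + u < length (cprefix (Suc n))"
    using assms length_Cfive[of "Suc n"] by (simp add: cprefix_Suc)
  then have "cseq (Suc (length (cprefix n) + u)) = cprefix (Suc n) ! (length (cprefix n) + u)"
    by (rule cseq_Suc_eq_nth_cprefix)
  then show ?thesis
    unfolding block_start by (simp add: cprefix_Suc nth_append)
qed

lemma bseq_block:
  assumes "1 \<le> n" and "u \<le> 5 * fib n"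
  shows "bseq (5 * fib (n + 1) - 4 + u) = 5 * fib (n + 3) - 3 + sum_list (take u (map Suc (Cfive n)))"
proof -
  obtain m where n: "n = Suc m" using assms(1) by (cases n) auto
  have "length (cprefix m) + u \<le> length (cprefix n)"
    using assms length_Cfive[of n] by (simp add: n cprefix_Suc)
  then have "bseq (5 * fib (n + 1) - 4 + u) = 12 + sum_list (take (length (cprefix m) + u) (map Suc (cprefix n)))"
    using block_start[of m] by (simp add: n bseq_Suc_eq_sum_take)
  also have "\<dots> = 12 + sum_list (cprefix m) + length (cprefix m) + sum_list (take u (map Suc (Cfive n)))"
    by (simp add: n cprefix_Suc sum_list_Suc)
  finally have "bseq (5 * fib (n + 1) - 4 + u) = \<dots>" .
  moreover have "fib (n + 3) = fib (m + 4)" by (simp add: n add.commute)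
  ultimately show ?thesis
    using sum_list_cprefix[of m] length_cprefix[of m] fib_add_4[of m] by linarith
qed

lemma aseq_block_image:
  assumes "1 \<le> n"
  shows "aseq ` {5 * fib (n + 2) - 4 .. 5 * fib (n + 2) - 4 + 5 * fib (n + 1)}
    = (+) (5 * fib (n + 3) - 4) ` partial_sums (sigma (Cfive n))"
proof -
  have X: "Cfive (Suc n) = sigma (Cfive n)" using assms by (rule Cfive_Suc)
  have len: "length (sigma (Cfive n)) = 5 * fib (n + 1)"
    using length_Cfive[of "Suc n"] X by simp
  have "aseq ` {5 * fib (n + 2) - 4 .. 5 * fib (n + 2) - 4 + length (sigma (Cfive n))}
      = (+) (5 * fib (n + 3) - 4) ` partial_sums (sigma (Cfive n))"
    by (rule image_atLeastAtMost_eq_partial_sums, rule aseq_block[of _ n, unfolded X]) (simp add: len)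
  then show ?thesis unfolding len .
qed

lemma bseq_block_image:
  assumes "1 \<le> n"
  shows "bseq ` {5 * fib (n + 1) - 4 .. 5 * fib (n + 1) - 4 + 5 * fib n}
    = (+) (5 * fib (n + 3) - 4) ` (+) 1 ` partial_sums (map Suc (Cfive n))"
proof -
  define \<alpha> where "\<alpha> = 5 * fib (n + 3) - 4"
  have \<alpha>: "5 * fib (n + 3) - 3 = \<alpha> + 1"
    unfolding \<alpha>_def using fib_neq_0_nat[of "n + 3"] by linarith
  have len: "length (map Suc (Cfive n)) = 5 * fib n"
    using length_Cfive[OF assms] by simp
  have "bseq ` {5 * fib (n + 1) - 4 .. 5 * fib (n + 1) - 4 + length (map Suc (Cfive n))}
      = (+) (\<alpha> + 1) ` partial_sums (map Suc (Cfive n))"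
    by (rule image_atLeastAtMost_eq_partial_sums, rule bseq_block[OF assms, unfolded \<alpha>])
      (simp add: length_Cfive[OF assms])
  then show ?thesis unfolding len \<alpha>_def[symmetric] by (simp add: image_image ac_simps)
qed

lemma block_union:
  assumes "1 \<le> n"
  shows "aseq ` {5 * fib (n + 2) - 4 .. 5 * fib (n + 2) - 4 + 5 * fib (n + 1)}
       \<union> bseq ` {5 * fib (n + 1) - 4 .. 5 * fib (n + 1) - 4 + 5 * fib n}
       = {5 * fib (n + 3) - 4 .. 5 * fib (n + 4) - 3}"
proof -
  let ?W = "Cfive n"
  have "sum_list ?W + length ?W + 1 = 5 * fib (n + 2) + 1"
    using sum_list_Cfive[OF assms] length_Cfive[OF assms] fib_plus_2[of n] by simp
  then have "partial_sums (sigma ?W) \<union> (+) 1 ` partial_sums (map Suc ?W) = {0..5 * fib (n + 2) + 1}"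
    using sigma_partial_sums_interleave[OF set_Cfive] by simp
  moreover have "5 * fib (n + 3) - 4 + (5 * fib (n + 2) + 1) = 5 * fib (n + 4) - 3"
    using fib_add_4[of n] fib_neq_0_nat[of "n + 3"] by linarith
  ultimately show ?thesis
    unfolding aseq_block_image[OF assms] bseq_block_image[OF assms] image_Un[symmetric]
    by (simp add: add.commute)
qed

lemma block_disjoint:
  assumes "1 \<le> n"
  shows "aseq ` {5 * fib (n + 2) - 4 .. 5 * fib (n + 2) - 4 + 5 * fib (n + 1)}
       \<inter> bseq ` {5 * fib (n + 1) - 4 .. 5 * fib (n + 1) - 4 + 5 * fib n} = {}"
  unfolding aseq_block_image[OF assms] bseq_block_image[OF assms] image_Int[OF inj_on_add, symmetric]
  using sigma_partial_sums_disjoint[OF set_Cfive] by simp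

lemma block_meet_increments:
  assumes n: "1 \<le> n"
    and p: "5 * fib (n + 2) - 4 \<le> p" "p < 5 * fib (n + 3) - 4"
    and q: "5 * fib (n + 1) - 4 \<le> q" "q < 5 * fib (n + 2) - 4"
    and meet: "bseq q = aseq p + 1"
  shows "cseq p = 2" and "cseq q = 2 \<Longrightarrow> cseq (p + 1) = 1"
proof -
  obtain m where m: "n = Suc m" using n by (cases n) auto
  define W where "W = Cfive n"
  have X: "Cfive (Suc n) = sigma W" unfolding W_def using n by (rule Cfive_Suc)
  have lenX: "length (sigma W) = 5 * fib (n + 1)"
    using length_Cfive[of "Suc n"] X by simp
  have lenW: "length W = 5 * fib n"
    unfolding W_def using n by (rule length_Cfive)
  have fibs: "fib (n + 3) = fib (n + 2) + fib (n + 1)" "fib (n + 2) = fib (n + 1) + fib n"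
    using fib_add_3[of n] fib_plus_2[of n] by auto
  define u where "u = p - (5 * fib (n + 2) - 4)"
  define v where "v = q - (5 * fib (n + 1) - 4)"
  have pu: "p = 5 * fib (n + 2) - 4 + u" and u: "u < length (sigma W)"
    using p fibs lenX unfolding u_def by linarith+
  have qv: "q = 5 * fib (n + 1) - 4 + v" and v: "v < length W"
    using q fibs lenW unfolding v_def by linarith+
  have "aseq p = 5 * fib (n + 3) - 4 + sum_list (take u (sigma W))"
    using aseq_block[of u n] u unfolding lenX X pu by simp
  moreover have "bseq q = 5 * fib (n + 3) - 3 + sum_list (take v (map Suc W))"
    using bseq_block[OF n, of v] v lenW unfolding qv W_def by simp
  ultimately have "sum_list (take u (sigma W)) = sum_list (take v (map Suc W))"
    using meet fib_neq_0_nat[of "n + 3"] by linarith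
  then have X_u: "sigma W ! u = 2"
    and X_Suc_u: "W ! v = 2 \<Longrightarrow> Suc u < length (sigma W) \<and> sigma W ! Suc u = 1"
    using sigma_partial_sums_meet[OF set_Cfive[of n, folded W_def] u v] by auto
  show "cseq p = 2"
    using cseq_block[of u n] u X_u unfolding lenX X pu by simp
  assume "cseq q = 2"
  moreover have "cseq q = W ! v"
    using cseq_block[of v m] v lenW unfolding qv W_def m by simp
  ultimately have "Suc u < length (sigma W)" "sigma W ! Suc u = 1" using X_Suc_u by auto
  then show "cseq (p + 1) = 1"
    using cseq_block[of "Suc u" n] unfolding lenX X pu by simp
qed

lemma block_successors:
  assumes "1 \<le> n"
    and p: "5 * fib (n + 2) - 4 \<le> p" "p < 5 * fib (n + 3) - 4"
    and q: "5 * fib (n + 1) - 4 \<le> q" "q < 5 * fib (n + 2) - 4"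
    and "bseq q = aseq p + 1"
  shows "aseq (p + 1) = aseq p + 2"
    and "bseq (q + 1) = bseq q + 3 \<Longrightarrow> aseq (p + 2) = aseq p + 3"
proof -
  have p1: "1 \<le> p" and q1: "1 \<le> q"
    using p q fib_neq_0_nat[of "n + 1"] fib_mono[of "n + 1" "n + 2"] by linarith+
  show a1: "aseq (p + 1) = aseq p + 2"
    using aseq_Suc[OF p1] block_meet_increments(1)[OF assms] by simp
  assume "bseq (q + 1) = bseq q + 3"
  then have "cseq q = 2" using bseq_Suc[OF q1] by simp
  then show "aseq (p + 2) = aseq p + 3"
    using aseq_Suc[of "p + 1"] a1 block_meet_increments(2)[OF assms] by simp
qed

lemma block_endpoints:
  assumes "1 \<le> n"
  shows "aseq (5 * fib (n + 2) - 4) = 5 * fib (n + 3) - 4"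
    and "aseq (5 * fib (n + 2) - 4 + 5 * fib (n + 1)) = 5 * fib (n + 4) - 4"
    and "bseq (5 * fib (n + 1) - 4) = 5 * fib (n + 3) - 3"
    and "bseq (5 * fib (n + 1) - 4 + 5 * fib n) = 5 * fib (n + 4) - 3"
proof -
  have fibs: "fib (n + 4) = fib (n + 3) + fib (n + 2)" "fib (n + 2) = fib (n + 1) + fib n"
    "0 < fib (n + 3)"
    using fib_add_4[of n] fib_plus_2[of n] fib_neq_0_nat[of "n + 3"] by auto
  show "aseq (5 * fib (n + 2) - 4) = 5 * fib (n + 3) - 4"
    using aseq_block[of 0 n] by simp
  show "bseq (5 * fib (n + 1) - 4) = 5 * fib (n + 3) - 3"
    using bseq_block[OF assms, of 0] by simp
  have "aseq (5 * fib (n + 2) - 4 + 5 * fib (n + 1)) = 5 * fib (n + 3) - 4 + 5 * fib (n + 2)"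
    using aseq_block[of "5 * fib (n + 1)" n] length_Cfive[of "Suc n"] sum_list_Cfive[of "Suc n"] by simp
  then show "aseq (5 * fib (n + 2) - 4 + 5 * fib (n + 1)) = 5 * fib (n + 4) - 4"
    using fibs by linarith
  have "bseq (5 * fib (n + 1) - 4 + 5 * fib n) = 5 * fib (n + 3) - 3 + 5 * fib (n + 2)"
    using bseq_block[OF assms, of "5 * fib n"] length_Cfive[OF assms] sum_list_Cfive[OF assms] fibs(2)
    by (simp add: sum_list_Suc)
  then show "bseq (5 * fib (n + 1) - 4 + 5 * fib n) = 5 * fib (n + 4) - 3"
    using fibs by linarith
qed

lemma strict_mono_on_atLeastI:
  fixes f :: "nat \<Rightarrow> 'a::order"
  assumes "\<And>j. k \<le> j \<Longrightarrow> f j < f (Suc j)"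
  shows "strict_mono_on {k..} f"
proof (rule strict_mono_onI)
  fix i j assume "i \<in> {k..}" and "i < j"
  then have "k \<le> i" and "Suc i \<le> j" by auto
  from this(2) show "f i < f j"
    by (induction j rule: dec_induct) (use assms \<open>k \<le> i\<close> in \<open>auto intro: order.strict_trans\<close>)
qed

lemma aseq_strict_mono_on: "strict_mono_on {1..} aseq"
  by (rule strict_mono_on_atLeastI) (simp add: aseq_Suc cseq_pos)

lemma bseq_strict_mono_on: "strict_mono_on {1..} bseq"
  by (rule strict_mono_on_atLeastI) (simp add: bseq_Suc)

lemma ex_bracketing_index:
  fixes f :: "nat \<Rightarrow> 'a::linorder"
  assumes "k \<le> K" and "f k \<le> y" and "y < f K"
  shows "\<exists>i\<ge>k. f i \<le> y \<and> y < f (Suc i)"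
  using assms(1,3)
proof (induction K rule: dec_induct)
  case base
  then show ?case using assms(2) by simp
next
  case (step K)
  then show ?case by (cases "y < f K") (auto simp: not_less)
qed

lemma fib_bracket:
  assumes "12 \<le> y"
  obtains N where "1 \<le> N" and "5 * fib (N + 3) - 3 \<le> y" and "y < 5 * fib (N + 4) - 3"
proof -
  have "y < 5 * fib (y + 3) - 3"
    using Suc_le_fib[of "y + 1"] by (simp add: numeral_eq_Suc)
  moreover have "5 * fib (1 + 3) - 3 \<le> y"
    using assms by (simp add: numeral_eq_Suc)
  ultimately obtain N where "1 \<le> N" "5 * fib (N + 3) - 3 \<le> y" "y < 5 * fib (Suc N + 3) - 3"
    using ex_bracketing_index[of 1 y "\<lambda>N. 5 * fib (N + 3) - 3" y] assms by auto
  then show thesis using that by (simp add: numeral_eq_Suc)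
qed

lemma aseq_bseq_disjoint: "aseq ` {1..} \<inter> bseq ` {1..} = {}"
proof -
  have False if m: "1 \<le> m" and k: "1 \<le> k" and eq: "aseq m = bseq k" for m k
  proof -
    have "12 \<le> bseq k" by (simp add: bseq_def)
    then obtain N where N: "1 \<le> N" "5 * fib (N + 3) - 3 \<le> bseq k" "bseq k < 5 * fib (N + 4) - 3"
      by (rule fib_bracket)
    define s where "s = 5 * fib (N + 2) - 4"
    define t where "t = 5 * fib (N + 1) - 4"
    have "1 \<le> s" "1 \<le> t" "0 < fib (N + 3)"
      unfolding s_def t_def
      using fib_neq_0_nat[of "N + 1"] fib_neq_0_nat[of "N + 3"] fib_mono[of "N + 1" "N + 2"] by linarith+
    have "aseq s < aseq m" and "aseq m \<le> aseq (s + 5 * fib (N + 1))"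
      using N eq block_endpoints(1,2)[OF N(1), folded s_def] \<open>0 < fib (N + 3)\<close> by linarith+
    then have "m \<in> {s .. s + 5 * fib (N + 1)}"
      using aseq_strict_mono_on \<open>1 \<le> s\<close> m
      by (auto simp: strict_mono_on_less strict_mono_on_less_eq)
    have "bseq t \<le> bseq k" and "bseq k \<le> bseq (t + 5 * fib N)"
      using N block_endpoints(3,4)[OF N(1), folded t_def] by linarith+
    then have "k \<in> {t .. t + 5 * fib N}"
      using bseq_strict_mono_on \<open>1 \<le> t\<close> k
      by (auto simp: strict_mono_on_less_eq)
    with \<open>m \<in> {s .. s + 5 * fib (N + 1)}\<close> show False
      using block_disjoint[OF N(1), folded s_def t_def] eq by (metis IntI empty_iff imageI)
  qed
  then show ?thesis by blast
qed

lemma aseq_bseq_union: "aseq ` {1..} \<union> bseq ` {1..} = {6..}"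
proof (intro equalityI subsetI)
  fix y assume "y \<in> aseq ` {1..} \<union> bseq ` {1..}"
  then show "y \<in> {6..}" by (auto simp: aseq_def bseq_def)
next
  fix y :: nat assume "y \<in> {6..}"
  then have y: "6 \<le> y" by simp
  show "y \<in> aseq ` {1..} \<union> bseq ` {1..}"
  proof (cases "y \<le> 11")
    case True
    have "Cfive 1 = [1, 1, 1, 1, 1]" by (simp add: Cfive_def Cblk_def numeral_eq_Suc)
    then have "aseq (1 + (y - 6)) = y"
      using aseq_block[of "y - 6" 0] y True by (simp add: take_Cons' numeral_eq_Suc)
    then show ?thesis by (metis UnI1 atLeast_iff image_eqI le_add1)
  next
    case False
    then obtain N where N: "1 \<le> N" "5 * fib (N + 3) - 3 \<le> y" "y < 5 * fib (N + 4) - 3"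
      using fib_bracket[of y] by auto
    then have "y \<in> aseq ` {5 * fib (N + 2) - 4 .. 5 * fib (N + 2) - 4 + 5 * fib (N + 1)}
       \<union> bseq ` {5 * fib (N + 1) - 4 .. 5 * fib (N + 1) - 4 + 5 * fib N}"
      unfolding block_union[OF N(1)] by simp
    moreover have "1 \<le> 5 * fib (N + 2) - 4" "1 \<le> 5 * fib (N + 1) - 4"
      using fib_neq_0_nat[of "N + 1"] fib_mono[of "N + 1" "N + 2"] by linarith+
    ultimately show ?thesis by auto
  qed
qed

theorem lemma4p3:
  fixes n :: nat
  assumes "n \<ge> 1"
  shows
   "(\<forall>p q. 5 * fib (n+2) - 4 \<le> p \<and> p < 5 * fib (n+3) - 4 \<and>
           5 * fib (n+1) - 4 \<le> q \<and> q < 5 * fib (n+2) - 4 \<and>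
           bseq q = aseq p + 1 \<longrightarrow>
        (bseq (q+1) = bseq q + 3 \<longrightarrow>
            aseq (p+1) = aseq p + 2 \<and> aseq (p+2) = aseq p + 3 \<and> bseq (q+1) = aseq (p+2) + 1) \<and>
        (bseq (q+1) = bseq q + 2 \<longrightarrow>
            aseq (p+1) = aseq p + 2 \<and> bseq (q+1) = aseq (p+1) + 1))
  \<and> (aseq ` {5 * fib (n+2) - 4 .. 5 * fib (n+2) - 4 + 5 * fib (n+1)}
       \<union> bseq ` {5 * fib (n+1) - 4 .. 5 * fib (n+1) - 4 + 5 * fib n}
       = {5 * fib (n+3) - 4 .. 5 * fib (n+4) - 3})
  \<and> (aseq ` {5 * fib (n+2) - 4 .. 5 * fib (n+2) - 4 + 5 * fib (n+1)}
       \<inter> bseq ` {5 * fib (n+1) - 4 .. 5 * fib (n+1) - 4 + 5 * fib n} = {})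
  \<and> (aseq ` {1..} \<inter> bseq ` {1..} = {})
  \<and> (aseq ` {1..} \<union> bseq ` {1..} = {6..})"
proof -
  have "(bseq (q+1) = bseq q + 3 \<longrightarrow>
            aseq (p+1) = aseq p + 2 \<and> aseq (p+2) = aseq p + 3 \<and> bseq (q+1) = aseq (p+2) + 1) \<and>
        (bseq (q+1) = bseq q + 2 \<longrightarrow>
            aseq (p+1) = aseq p + 2 \<and> bseq (q+1) = aseq (p+1) + 1)"
    if "5 * fib (n+2) - 4 \<le> p" "p < 5 * fib (n+3) - 4"
      "5 * fib (n+1) - 4 \<le> q" "q < 5 * fib (n+2) - 4" "bseq q = aseq p + 1" for p q
    using block_successors[OF assms that] that(5) by auto
  then show ?thesis
    using block_union[OF assms] block_disjoint[OF assms] aseq_bseq_disjoint aseq_bseq_union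
    by blast
qed

end
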